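(* Let $\mathbb{F}$ be an algebraically closed field and let $n\ge 2$. Then there is no $n$-tuple $(B_1,\dots,B_n)$ of matrices in $M_n(\mathbb{F})$ that is strongly independent over $\mathbb{F}$.
   Context: An $n$-tuple $(B_1,\dots,B_n)$ of matrices in $M_n(\mathbb{F})$ is called strongly independent over $\mathbb{F}$ if for every nonzero column vector $v\in\mathbb{F}^{n\times 1}$, the vectors $B_1v,\dots,B_nv$ are linearly independent over $\mathbb{F}$. *)

theory Defs
  imports "HOL-Analysis.Analysis" "HOL-Computational_Algebra.Polynomial"
begin

definition lin_indep_family :: "('n::finite \<Rightarrow> 'a::field ^ 'm) \<Rightarrow> bool" where
  "lin_indep_family w \<longleftrightarrow> (\<forall>c :: 'n \<Rightarrow> 'a. (\<Sum>i\<in>UNIV. c i *s w i) = 0 \<longrightarrow> (\<forall>i. c i = 0))"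

definition strongly_independent :: "('n::finite \<Rightarrow> 'a::field ^ 'n ^ 'n) \<Rightarrow> bool" where
  "strongly_independent B \<longleftrightarrow> (\<forall>v :: 'a ^ 'n. v \<noteq> 0 \<longrightarrow> lin_indep_family (\<lambda>i. B i *v v))"

end

theory Submission
  imports Defs
begin

(* Over an algebraically closed field every square matrix M has an eigenvector: for w \<noteq> 0
   the n + 1 vectors M^k w, k \<le> n, are linearly dependent, so p(M) w = 0 for some nonzero
   polynomial p; splitting p into linear factors, one of them kills a nonzero vector.
   If (B_1, ..., B_n) were strongly independent, every B_i would be invertible, and an
   eigenvector v of B_1^-1 B_2 with eigenvalue \<lambda> would give B_2 v = \<lambda> B_1 v, a linear
   dependence between B_1 v and B_2 v. *)

lemma vec_family_dependent:
  fixes g :: "'i \<Rightarrow> 'a::field ^ 'n"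
  assumes "finite I" and "card I > CARD('n)"
  shows "\<exists>c. (\<exists>i\<in>I. c i \<noteq> 0) \<and> (\<Sum>i\<in>I. c i *s g i) = 0"
proof (cases "inj_on g I")
  case True
  have "vec.dim (g ` I) < card (g ` I)"
    using vec.dim_subset_UNIV[of "g ` I"] assms True
    by (simp add: card_image vec.dimension_def card_cart_basis)
  then have "vec.dependent (g ` I)"
    by (rule vec.dependent_biggerset_general)
  then obtain u where "\<exists>v\<in>g ` I. u v \<noteq> 0" "(\<Sum>v\<in>g ` I. u v *s v) = 0"
    using vec.dependent_finite[of "g ` I"] assms(1) by auto
  then show ?thesis
    using True by (intro exI[of _ "u \<circ> g"]) (auto simp: sum.reindex)
next
  case False
  then obtain i j where ij: "i \<in> I" "j \<in> I" "i \<noteq> j" "g i = g j"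
    unfolding inj_on_def by blast
  define c :: "'i \<Rightarrow> 'a" where "c k = (if k = i then 1 else 0) - (if k = j then 1 else 0)" for k
  have "(\<Sum>k\<in>I. c k *s g k) = g i - g j"
    using ij assms(1)
    by (simp add: c_def sum_subtractf if_distrib[of "\<lambda>a. a *s _"] cong: if_cong)
  then show ?thesis
    using ij by (intro exI[of _ c]) (auto simp: c_def)
qed

definition poly_matrix_apply :: "'a::field poly \<Rightarrow> 'a ^ 'n ^ 'n \<Rightarrow> 'a ^ 'n \<Rightarrow> 'a ^ 'n" where
  "poly_matrix_apply p M v = fold_coeffs (\<lambda>a u. a *s v + M *v u) p 0"

lemma poly_matrix_apply_0 [simp]: "poly_matrix_apply 0 M v = 0"
  by (simp add: poly_matrix_apply_def)

lemma poly_matrix_apply_pCons [simp]: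
  "poly_matrix_apply (pCons a p) M v = a *s v + M *v poly_matrix_apply p M v"
  by (cases "p = 0"; cases "a = 0") (simp_all add: poly_matrix_apply_def)

lemma poly_matrix_apply_1 [simp]: "poly_matrix_apply 1 M v = v"
  by (simp add: one_pCons)

lemma poly_matrix_apply_add:
  "poly_matrix_apply (p + q) M v = poly_matrix_apply p M v + poly_matrix_apply q M v"
  by (induction p q rule: poly_induct2)
    (auto simp: matrix_vector_right_distrib vector_sadd_rdistrib algebra_simps)

lemma poly_matrix_apply_smult:
  "poly_matrix_apply (smult c p) M v = c *s poly_matrix_apply p M v"
  by (induction p) (auto simp: vec.scale vector_add_ldistrib)

lemma poly_matrix_apply_sum:
  "finite I \<Longrightarrow> poly_matrix_apply (\<Sum>i\<in>I. p i) M v = (\<Sum>i\<in>I. poly_matrix_apply (p i) M v)"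
  by (induction I rule: finite_induct) (auto simp: poly_matrix_apply_add)

lemma poly_matrix_apply_monom:
  "poly_matrix_apply (monom c k) M v = c *s ((*v) M ^^ k) v"
  by (induction k) (auto simp: monom_Suc monom_0 vec.scale)

lemma poly_matrix_apply_linear_factor:
  "poly_matrix_apply ([:-x, 1:] * p) M v =
     M *v poly_matrix_apply p M v - x *s poly_matrix_apply p M v"
  unfolding mult_pCons_left poly_matrix_apply_add poly_matrix_apply_smult by simp

lemma poly_matrix_apply_annihilator_exists:
  fixes M :: "'a::field ^ 'n ^ 'n"
  shows "\<exists>p. p \<noteq> 0 \<and> poly_matrix_apply p M v = 0"
proof -
  obtain c where c: "\<exists>k\<in>{..CARD('n)}. c k \<noteq> 0" "(\<Sum>k\<le>CARD('n). c k *s ((*v) M ^^ k) v) = 0"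
    using vec_family_dependent[of "{..CARD('n)}" "\<lambda>k. ((*v) M ^^ k) v"] by auto
  define p where "p = (\<Sum>k\<le>CARD('n). monom (c k) k)"
  have "coeff p k = (if k \<le> CARD('n) then c k else 0)" for k
    by (simp add: p_def coeff_sum)
  then have "p \<noteq> 0"
    using c(1) by (metis atMost_iff coeff_0)
  moreover have "poly_matrix_apply p M v = 0"
    using c(2) by (simp add: p_def poly_matrix_apply_sum poly_matrix_apply_monom)
  ultimately show ?thesis by blast
qed

lemma eigenvector_if_linear_factors_annihilate:
  fixes M :: "'a::field ^ 'n ^ 'n"
  assumes "w \<noteq> 0" and "poly_matrix_apply (\<Prod>x\<in>#A. [:-x, 1:]) M w = 0"
  shows "\<exists>v l. v \<noteq> 0 \<and> M *v v = l *s v"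
  using assms
proof (induction A)
  case empty
  then show ?case by simp
next
  case (add x A)
  define u where "u = poly_matrix_apply (\<Prod>x\<in>#A. [:-x, 1:]) M w"
  show ?case
  proof (cases "u = 0")
    case True
    then show ?thesis using add.IH add.prems(1) by (simp add: u_def)
  next
    case False
    have "M *v u - x *s u = 0"
      using add.prems(2)
      by (simp only: image_mset_add_mset prod_mset.add_mset poly_matrix_apply_linear_factor u_def)
    then show ?thesis using False by auto
  qed
qed

lemma matrix_has_eigenvector:
  fixes M :: "'a::alg_closed_field ^ 'n ^ 'n"
  shows "\<exists>v l. v \<noteq> 0 \<and> M *v v = l *s v"
proof -
  define w :: "'a ^ 'n" where "w = vec 1"
  have "w \<noteq> 0" by (simp add: w_def vec_eq_iff)
  obtain p where p: "p \<noteq> 0" "poly_matrix_apply p M w = 0"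
    using poly_matrix_apply_annihilator_exists by blast
  obtain A where "p = smult (lead_coeff p) (\<Prod>x\<in>#A. [:-x, 1:])"
    using alg_closed_imp_factorization[OF p(1)] by blast
  then have "poly_matrix_apply (\<Prod>x\<in>#A. [:-x, 1:]) M w = 0"
    using p by (metis poly_matrix_apply_smult leading_coeff_0_iff vector_mul_eq_0)
  then show ?thesis
    using eigenvector_if_linear_factors_annihilate \<open>w \<noteq> 0\<close> by blast
qed

lemma lin_indep_family_nonzero:
  fixes w :: "'n::finite \<Rightarrow> 'a::field ^ 'm"
  assumes "lin_indep_family w"
  shows "w i \<noteq> 0"
proof
  assume "w i = 0"
  define c :: "'n \<Rightarrow> 'a" where "c k = (if k = i then 1 else 0)" for k
  have "(\<Sum>k\<in>UNIV. c k *s w k) = 0"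
    using \<open>w i = 0\<close> by (simp add: c_def if_distrib[of "\<lambda>a. a *s _"] cong: if_cong)
  then have "c i = 0"
    using assms unfolding lin_indep_family_def by blast
  then show False
    by (simp add: c_def)
qed

lemma lin_indep_family_not_parallel:
  assumes "lin_indep_family w" and "i \<noteq> j"
  shows "w j \<noteq> l *s w i"
proof
  assume "w j = l *s w i"
  define c where "c k = (if k = i then l else 0) - (if k = j then 1 else 0)" for k
  have "(\<Sum>k\<in>UNIV. c k *s w k) = 0"
    using \<open>w j = l *s w i\<close>
    by (simp add: c_def sum_subtractf if_distrib[of "\<lambda>a. a *s _"] cong: if_cong)
  then have "c j = 0"
    using assms(1) unfolding lin_indep_family_def by blast
  then show False
    using assms(2) by (simp add: c_def)
qed

lemma strongly_independent_invertible:
  assumes "strongly_independent B"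
  shows "invertible (B i)"
proof -
  have "B i *v v \<noteq> 0" if "v \<noteq> 0" for v
    using assms that lin_indep_family_nonzero unfolding strongly_independent_def by blast
  then show ?thesis
    unfolding invertible_left_inverse matrix_left_invertible_ker by blast
qed

theorem theorem1p6:
  assumes "CARD('n::finite) \<ge> 2"
  shows "\<not> (\<exists>B :: 'n \<Rightarrow> 'a::alg_closed_field ^ 'n ^ 'n. strongly_independent B)"
proof
  assume "\<exists>B :: 'n \<Rightarrow> 'a ^ 'n ^ 'n. strongly_independent B"
  then obtain B :: "'n \<Rightarrow> 'a ^ 'n ^ 'n" where B: "strongly_independent B" by blast
  obtain i j :: 'n where "i \<noteq> j"
    using assms card_le_Suc0_iff_eq[of "UNIV :: 'n set"] by fastforce
  obtain C where C: "B i ** C = mat 1"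
    using strongly_independent_invertible[OF B] invertible_right_inverse by blast
  obtain v l where "v \<noteq> 0" and eigen: "(C ** B j) *v v = l *s v"
    using matrix_has_eigenvector by blast
  have "B j *v v = B i *v ((C ** B j) *v v)"
    by (simp add: matrix_vector_mul_assoc matrix_mul_assoc C)
  also have "\<dots> = l *s (B i *v v)"
    by (simp add: eigen vec.scale)
  finally show False
    using B \<open>v \<noteq> 0\<close> \<open>i \<noteq> j\<close> lin_indep_family_not_parallel
    unfolding strongly_independent_def by blast
qed

end
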